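(* Let $A\to M$ be a vector bundle of rank at least $n$. Let $\widehat{\xi}^1,\dots,\widehat{\xi}^n\in\Gamma(A^* )$ be linearly independent over $C^\infty(M)$ and let $\widehat{X}_1,\dots,\widehat{X}_n\in\Gamma(\mathrm{CDO}(A))$ be covariant differential operators with symbols $\widehat{x}_1,\dots,\widehat{x}_n\in\Gamma(TM)$. Define the anchor $a_A:A\to TM$, the operator $\nabla^A:\Gamma(A)\times\Gamma(A)\to\Gamma(A)$ and the bracket $[\cdot,\cdot]_A$ on $\Gamma(A)$ by $$a_A(y)=\sum_{i=1}^n\langle y,\widehat{\xi}^i\rangle\,\widehat{x}_i,\qquad \nabla^A_y z=\sum_{i=1}^n\langle y,\widehat{\xi}^i\rangle\,\widehat{X}_i(z),\qquad [y,z]_A=\nabla^A_yz-\nabla^A_zy,$$ for $y,z\in\Gamma(A)$. Suppose there are functions $a_{ik}^j\in C^\infty(M)$ ($1\le i,j,k\le n$) such that for all $i,j$ $$\widehat{X}_i(\widehat{\xi}^j)=\sum_{k=1}^n a_{ik}^j\,\widehat{\xi}^k,\qquad [\widehat{X}_i,\widehat{X}_j]=\sum_{k=1}^n\big(a_{ji}^k-a_{ij}^k\big)\widehat{X}_k .$$ Then $R^{\nabla^A}(x,y)z=0$ for all $x,y,z\in\Gamma(A)$, and $(A,[\cdot,\cdot]_A,a_A)$ is a Lie algebroid.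
   Context: A covariant differential operator on $A$ is an $\mathbb{R}$-linear map $\widehat{X}:\Gamma(A)\to\Gamma(A)$ together with a vector field $\widehat{x}$ (its symbol) such that $\widehat{X}(fy)=f\widehat{X}(y)+\widehat{x}(f)\,y$ for all $f\in C^\infty(M)$, $y\in\Gamma(A)$. Such an operator acts on $\Gamma(A^* )$ by the dual action $\langle \widehat{X}(\xi),y\rangle=\widehat{x}\langle\xi,y\rangle-\langle\xi,\widehat{X}(y)\rangle$. The commutator $[\widehat{X},\widehat{Y}]=\widehat{X}\circ\widehat{Y}-\widehat{Y}\circ\widehat{X}$ of covariant differential operators is a covariant differential operator. For the operator $\nabla=\nabla^A$ the curvature is $R^{\nabla}(x,y)z=\nabla_x\nabla_yz-\nabla_y\nabla_xz-\nabla_{[x,y]_A}z$. A Lie algebroid $(A,[\cdot,\cdot]_A,a_A)$ is a vector bundle with a bundle map $a_A:A\to TM$ and an $\mathbb{R}$-bilinear skew-symmetric bracket on $\Gamma(A)$ satisfying $[x,fy]_A=f[x,y]_A+a_A(x)(f)\,y$ and the Jacobi identity. *)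

theory Defs
  imports Complex_Main
begin

text \<open>Smooth functions C^\<infinity>(M) are a set C of real-valued
functions on the points of M (a unital subalgebra); sections of A are the
elements of a type 's (an additive group) with a C-module action sm;
vector fields are derivations of C; sections of the dual bundle are the
C-linear maps from sections of A to C.\<close>

definition smooth_algebra :: "('m \<Rightarrow> real) set \<Rightarrow> bool" where
  "smooth_algebra C \<longleftrightarrow>
     (\<forall>c. (\<lambda>_. c) \<in> C) \<and>
     (\<forall>f\<in>C. \<forall>g\<in>C. (\<lambda>m. f m + g m) \<in> C \<and> (\<lambda>m. f m * g m) \<in> C) \<and>
     (\<forall>f\<in>C. (\<lambda>m. - f m) \<in> C)"

definition section_module ::
  "('m \<Rightarrow> real) set \<Rightarrow> (('m \<Rightarrow> real) \<Rightarrow> 's::ab_group_add \<Rightarrow> 's) \<Rightarrow> bool" where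
  "section_module C sm \<longleftrightarrow>
     (\<forall>f\<in>C. \<forall>y z. sm f (y + z) = sm f y + sm f z) \<and>
     (\<forall>f\<in>C. \<forall>g\<in>C. \<forall>y. sm (\<lambda>m. f m + g m) y = sm f y + sm g y) \<and>
     (\<forall>f\<in>C. \<forall>g\<in>C. \<forall>y. sm (\<lambda>m. f m * g m) y = sm f (sm g y)) \<and>
     (\<forall>y. sm (\<lambda>_. 1) y = y)"

definition vector_field ::
  "('m \<Rightarrow> real) set \<Rightarrow> (('m \<Rightarrow> real) \<Rightarrow> ('m \<Rightarrow> real)) \<Rightarrow> bool" where
  "vector_field C v \<longleftrightarrow>
     (\<forall>f\<in>C. v f \<in> C) \<and>
     (\<forall>f\<in>C. \<forall>g\<in>C. v (\<lambda>m. f m + g m) = (\<lambda>m. v f m + v g m)) \<and>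
     (\<forall>c. \<forall>f\<in>C. v (\<lambda>m. c * f m) = (\<lambda>m. c * v f m)) \<and>
     (\<forall>f\<in>C. \<forall>g\<in>C. v (\<lambda>m. f m * g m) = (\<lambda>m. f m * v g m + g m * v f m))"

definition dual_section ::
  "('m \<Rightarrow> real) set \<Rightarrow> (('m \<Rightarrow> real) \<Rightarrow> 's::ab_group_add \<Rightarrow> 's) \<Rightarrow> ('s \<Rightarrow> 'm \<Rightarrow> real) \<Rightarrow> bool" where
  "dual_section C sm \<xi> \<longleftrightarrow>
     (\<forall>y. \<xi> y \<in> C) \<and>
     (\<forall>y z. \<xi> (y + z) = (\<lambda>m. \<xi> y m + \<xi> z m)) \<and>
     (\<forall>f\<in>C. \<forall>y. \<xi> (sm f y) = (\<lambda>m. f m * \<xi> y m))"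

definition cdo ::
  "('m \<Rightarrow> real) set \<Rightarrow> (('m \<Rightarrow> real) \<Rightarrow> 's::ab_group_add \<Rightarrow> 's) \<Rightarrow> ('s \<Rightarrow> 's)
     \<Rightarrow> (('m \<Rightarrow> real) \<Rightarrow> ('m \<Rightarrow> real)) \<Rightarrow> bool" where
  "cdo C sm X x \<longleftrightarrow>
     vector_field C x \<and>
     (\<forall>y z. X (y + z) = X y + X z) \<and>
     (\<forall>c. \<forall>y. X (sm (\<lambda>_. c) y) = sm (\<lambda>_. c) (X y)) \<and>
     (\<forall>f\<in>C. \<forall>y. X (sm f y) = sm f (X y) + sm (x f) y)"

definition cdo_dual ::
  "(('m \<Rightarrow> real) \<Rightarrow> ('m \<Rightarrow> real)) \<Rightarrow> ('s \<Rightarrow> 's) \<Rightarrow> ('s \<Rightarrow> 'm \<Rightarrow> real) \<Rightarrow> ('s \<Rightarrow> 'm \<Rightarrow> real)" where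
  "cdo_dual x X \<xi> = (\<lambda>y m. x (\<xi> y) m - \<xi> (X y) m)"

definition lin_indep_dual ::
  "('m \<Rightarrow> real) set \<Rightarrow> nat \<Rightarrow> (nat \<Rightarrow> 's \<Rightarrow> 'm \<Rightarrow> real) \<Rightarrow> bool" where
  "lin_indep_dual C n \<xi> \<longleftrightarrow>
     (\<forall>f. (\<forall>i\<in>{1..n}. f i \<in> C) \<and> (\<forall>y. (\<lambda>m. \<Sum>i=1..n. f i m * \<xi> i y m) = (\<lambda>_. 0))
          \<longrightarrow> (\<forall>i\<in>{1..n}. f i = (\<lambda>_. 0)))"

definition anchorA ::
  "nat \<Rightarrow> (nat \<Rightarrow> 's \<Rightarrow> 'm \<Rightarrow> real) \<Rightarrow> (nat \<Rightarrow> ('m \<Rightarrow> real) \<Rightarrow> ('m \<Rightarrow> real))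
     \<Rightarrow> 's \<Rightarrow> ('m \<Rightarrow> real) \<Rightarrow> ('m \<Rightarrow> real)" where
  "anchorA n \<xi> xs y f = (\<lambda>m. \<Sum>i=1..n. \<xi> i y m * xs i f m)"

definition nablaA ::
  "(('m \<Rightarrow> real) \<Rightarrow> 's::ab_group_add \<Rightarrow> 's) \<Rightarrow> nat \<Rightarrow> (nat \<Rightarrow> 's \<Rightarrow> 'm \<Rightarrow> real)
     \<Rightarrow> (nat \<Rightarrow> 's \<Rightarrow> 's) \<Rightarrow> 's \<Rightarrow> 's \<Rightarrow> 's" where
  "nablaA sm n \<xi> X y z = (\<Sum>i=1..n. sm (\<xi> i y) (X i z))"

definition bracketA ::
  "(('m \<Rightarrow> real) \<Rightarrow> 's::ab_group_add \<Rightarrow> 's) \<Rightarrow> nat \<Rightarrow> (nat \<Rightarrow> 's \<Rightarrow> 'm \<Rightarrow> real)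
     \<Rightarrow> (nat \<Rightarrow> 's \<Rightarrow> 's) \<Rightarrow> 's \<Rightarrow> 's \<Rightarrow> 's" where
  "bracketA sm n \<xi> X y z = nablaA sm n \<xi> X y z - nablaA sm n \<xi> X z y"

definition curvature ::
  "('s \<Rightarrow> 's \<Rightarrow> 's::ab_group_add) \<Rightarrow> ('s \<Rightarrow> 's \<Rightarrow> 's) \<Rightarrow> 's \<Rightarrow> 's \<Rightarrow> 's \<Rightarrow> 's" where
  "curvature nabla br x y z = nabla x (nabla y z) - nabla y (nabla x z) - nabla (br x y) z"

definition lie_algebroid ::
  "('m \<Rightarrow> real) set \<Rightarrow> (('m \<Rightarrow> real) \<Rightarrow> 's::ab_group_add \<Rightarrow> 's) \<Rightarrow> ('s \<Rightarrow> 's \<Rightarrow> 's)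
     \<Rightarrow> ('s \<Rightarrow> ('m \<Rightarrow> real) \<Rightarrow> ('m \<Rightarrow> real)) \<Rightarrow> bool" where
  "lie_algebroid C sm br anc \<longleftrightarrow>
     (\<forall>y. vector_field C (anc y)) \<and>
     (\<forall>y z. \<forall>f\<in>C. anc (y + z) f = (\<lambda>m. anc y f m + anc z f m)) \<and>
     (\<forall>g\<in>C. \<forall>y. \<forall>f\<in>C. anc (sm g y) f = (\<lambda>m. g m * anc y f m)) \<and>
     (\<forall>x y z. br x (y + z) = br x y + br x z) \<and>
     (\<forall>x y z. br (x + y) z = br x z + br y z) \<and>
     (\<forall>c x y. br x (sm (\<lambda>_. c) y) = sm (\<lambda>_. c) (br x y)) \<and>
     (\<forall>c x y. br (sm (\<lambda>_. c) x) y = sm (\<lambda>_. c) (br x y)) \<and>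
     (\<forall>x y. br x y = - br y x) \<and>
     (\<forall>x y. \<forall>f\<in>C. br x (sm f y) = sm f (br x y) + sm (anc x f) y) \<and>
     (\<forall>x y z. br x (br y z) + br y (br z x) + br z (br x y) = 0)"

end

theory Submission
  imports Defs
begin

(* nabla_y z = sum_i xi^i(y) X_i z is a connection on A with anchor a_A, and [y,z]_A is
   its torsion-free bracket.  Expanding in the frame X_i,
     nabla_x nabla_y z - nabla_y nabla_x z
       = sum_ij xi^i(x) xi^j(y) [X_i,X_j] z + sum_k (a_A(x) xi^k(y) - a_A(y) xi^k(x)) X_k z,
   while the formula for the dual action of X_i on xi^k gives
     xi^k([x,y]_A) = a_A(x) xi^k(y) - a_A(y) xi^k(x) + sum_ij (a^k_ji - a^k_ij) xi^i(x) xi^j(y).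
   The commutator hypothesis makes the two structure-function terms agree, so the
   curvature vanishes.  For a torsion-free connection the Jacobiator is the cyclic sum of
   curvatures (first Bianchi identity), which gives the Jacobi identity; the remaining Lie
   algebroid axioms are the connection axioms. *)

locale smooth_functions =
  fixes C :: "('m \<Rightarrow> real) set"
  assumes smooth_algebra: "smooth_algebra C"
begin

lemma const_mem: "(\<lambda>_. c) \<in> C"
  using smooth_algebra unfolding smooth_algebra_def by blast

lemma add_mem: "f \<in> C \<Longrightarrow> g \<in> C \<Longrightarrow> (\<lambda>m. f m + g m) \<in> C"
  using smooth_algebra unfolding smooth_algebra_def by blast

lemma mult_mem: "f \<in> C \<Longrightarrow> g \<in> C \<Longrightarrow> (\<lambda>m. f m * g m) \<in> C"
  using smooth_algebra unfolding smooth_algebra_def by blast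

lemma diff_mem: "f \<in> C \<Longrightarrow> g \<in> C \<Longrightarrow> (\<lambda>m. f m - g m) \<in> C"
  using add_mem[of f "\<lambda>m. - g m"] smooth_algebra unfolding smooth_algebra_def by simp

lemma sum_mem: "(\<And>i. i \<in> I \<Longrightarrow> f i \<in> C) \<Longrightarrow> (\<lambda>m. \<Sum>i\<in>I. f i m) \<in> C"
  by (induction I rule: infinite_finite_induct) (simp_all add: const_mem add_mem)

lemmas mem_intros = const_mem add_mem mult_mem diff_mem sum_mem

lemma vector_field_const:
  assumes "vector_field C v"
  shows "v (\<lambda>_. c) = (\<lambda>_. 0)"
proof -
  have one: "(\<lambda>_. 1) \<in> C" by (rule const_mem)
  have Leibniz: "\<forall>f\<in>C. \<forall>g\<in>C. v (\<lambda>m. f m * g m) = (\<lambda>m. f m * v g m + g m * v f m)"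
    and scale: "\<forall>c. \<forall>f\<in>C. v (\<lambda>m. c * f m) = (\<lambda>m. c * v f m)"
    using assms unfolding vector_field_def by blast+
  have "v (\<lambda>_. 1) = (\<lambda>_. 0)"
    using Leibniz[rule_format, OF one one] by (simp add: fun_eq_iff)
  then show ?thesis
    using scale[rule_format, OF one, of c] by simp
qed

lemma vector_field_sum:
  assumes "\<And>i. i \<in> I \<Longrightarrow> g i \<in> C" and "\<And>i. i \<in> I \<Longrightarrow> vector_field C (v i)"
  shows "vector_field C (\<lambda>f m. \<Sum>i\<in>I. g i m * v i f m)"
  using assms unfolding vector_field_def
  by (auto intro!: mem_intros simp: fun_eq_iff algebra_simps sum.distrib sum_distrib_left)

end

locale smooth_module = smooth_functions C
  for C :: "('m \<Rightarrow> real) set" +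
  fixes sm :: "('m \<Rightarrow> real) \<Rightarrow> 's::ab_group_add \<Rightarrow> 's"
  assumes section_module: "section_module C sm"
begin

lemma additive_sm: "f \<in> C \<Longrightarrow> additive (sm f)"
  using section_module unfolding section_module_def additive_def by blast

lemma sm_diff_right: "f \<in> C \<Longrightarrow> sm f (y - z) = sm f y - sm f z"
  by (rule additive.diff[OF additive_sm])

lemma sm_sum_right: "f \<in> C \<Longrightarrow> sm f (\<Sum>i\<in>I. v i) = (\<Sum>i\<in>I. sm f (v i))"
  by (rule additive.sum[OF additive_sm])

lemma sm_add_left: "f \<in> C \<Longrightarrow> g \<in> C \<Longrightarrow> sm (\<lambda>m. f m + g m) y = sm f y + sm g y"
  using section_module unfolding section_module_def by blast

lemma sm_sm: "f \<in> C \<Longrightarrow> g \<in> C \<Longrightarrow> sm f (sm g y) = sm (\<lambda>m. f m * g m) y"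
  using section_module unfolding section_module_def by simp

lemma sm_zero_left: "sm (\<lambda>_. 0) y = 0"
  using sm_add_left[of "\<lambda>_. 0" "\<lambda>_. 0" y] const_mem by simp

lemma sm_diff_left: "f \<in> C \<Longrightarrow> g \<in> C \<Longrightarrow> sm (\<lambda>m. f m - g m) y = sm f y - sm g y"
  using sm_add_left[of "\<lambda>m. f m - g m" g y] by (simp add: diff_mem eq_diff_eq)

lemma sm_sum_left:
  "(\<And>i. i \<in> I \<Longrightarrow> f i \<in> C) \<Longrightarrow> sm (\<lambda>m. \<Sum>i\<in>I. f i m) y = (\<Sum>i\<in>I. sm (f i) y)"
proof (induction I rule: infinite_finite_induct)
  case (insert i I)
  then show ?case
    using sm_add_left[of "f i" "\<lambda>m. \<Sum>i\<in>I. f i m" y] by (simp add: sum_mem)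
qed (simp_all add: sm_zero_left)

lemma sm_double_sum_left:
  "(\<And>i j. i \<in> I \<Longrightarrow> j \<in> J \<Longrightarrow> f i j \<in> C) \<Longrightarrow>
    sm (\<lambda>m. \<Sum>i\<in>I. \<Sum>j\<in>J. f i j m) y = (\<Sum>i\<in>I. \<Sum>j\<in>J. sm (f i j) y)"
  by (simp add: sm_sum_left sum_mem)

end

definition anchor_map ::
  "('m \<Rightarrow> real) set \<Rightarrow> (('m \<Rightarrow> real) \<Rightarrow> 's::ab_group_add \<Rightarrow> 's)
     \<Rightarrow> ('s \<Rightarrow> ('m \<Rightarrow> real) \<Rightarrow> ('m \<Rightarrow> real)) \<Rightarrow> bool" where
  "anchor_map C sm anc \<longleftrightarrow>
     (\<forall>y. vector_field C (anc y)) \<and>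
     (\<forall>y z. \<forall>f\<in>C. anc (y + z) f = (\<lambda>m. anc y f m + anc z f m)) \<and>
     (\<forall>g\<in>C. \<forall>y. \<forall>f\<in>C. anc (sm g y) f = (\<lambda>m. g m * anc y f m))"

definition connection ::
  "('m \<Rightarrow> real) set \<Rightarrow> (('m \<Rightarrow> real) \<Rightarrow> 's::ab_group_add \<Rightarrow> 's)
     \<Rightarrow> ('s \<Rightarrow> ('m \<Rightarrow> real) \<Rightarrow> ('m \<Rightarrow> real)) \<Rightarrow> ('s \<Rightarrow> 's \<Rightarrow> 's) \<Rightarrow> bool" where
  "connection C sm anc nabla \<longleftrightarrow>
     (\<forall>x. additive (nabla x)) \<and>
     (\<forall>z. additive (\<lambda>x. nabla x z)) \<and>
     (\<forall>f\<in>C. \<forall>x y. nabla (sm f x) y = sm f (nabla x y)) \<and>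
     (\<forall>f\<in>C. \<forall>x y. nabla x (sm f y) = sm f (nabla x y) + sm (anc x f) y)"

lemma cyclic_bracket_eq_cyclic_curvature:
  fixes nabla :: "'s::ab_group_add \<Rightarrow> 's \<Rightarrow> 's"
  assumes right: "\<And>x. additive (nabla x)" and left: "\<And>z. additive (\<lambda>x. nabla x z)"
    and br: "\<And>x y. br x y = nabla x y - nabla y x"
  shows "br x (br y z) + br y (br z x) + br z (br x y) =
    curvature nabla br x y z + curvature nabla br y z x + curvature nabla br z x y"
proof -
  have diff: "nabla x (u - v) = nabla x u - nabla x v" "nabla (u - v) x = nabla u x - nabla v x"
    for x u v
    by (rule additive.diff[OF right], rule additive.diff[OF left])
  show ?thesis
    unfolding br curvature_def diff by (simp add: algebra_simps)
qed

context smooth_module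
begin

theorem lie_algebroid_of_flat_torsion_free:
  assumes anc: "anchor_map C sm anc" and nabla: "connection C sm anc nabla"
    and br: "\<And>x y. br x y = nabla x y - nabla y x"
    and flat: "\<And>x y z. curvature nabla br x y z = 0"
  shows "lie_algebroid C sm br anc"
proof -
  have right: "\<And>x. additive (nabla x)" and left: "\<And>z. additive (\<lambda>x. nabla x z)"
    and linear: "\<And>f x y. f \<in> C \<Longrightarrow> nabla (sm f x) y = sm f (nabla x y)"
    and Leibniz: "\<And>f x y. f \<in> C \<Longrightarrow> nabla x (sm f y) = sm f (nabla x y) + sm (anc x f) y"
    using nabla unfolding connection_def by blast+
  have "anc x (\<lambda>_. c) = (\<lambda>_. 0)" for x c
    using anc vector_field_const unfolding anchor_map_def by blast
  then have const_right: "nabla x (sm (\<lambda>_. c) y) = sm (\<lambda>_. c) (nabla x y)" for x y c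
    using Leibniz[OF const_mem] by (simp add: sm_zero_left)
  show ?thesis
    unfolding lie_algebroid_def
  proof (intro conjI allI ballI)
    show "vector_field C (anc y)" for y
      using anc unfolding anchor_map_def by blast
    show "anc (y + z) f = (\<lambda>m. anc y f m + anc z f m)" if "f \<in> C" for y z f
      using anc that unfolding anchor_map_def by blast
    show "anc (sm g y) f = (\<lambda>m. g m * anc y f m)" if "g \<in> C" and "f \<in> C" for g y f
      using anc that unfolding anchor_map_def by blast
    show "br x (y + z) = br x y + br x z" and "br (x + y) z = br x z + br y z" for x y z
      using additive.add[OF right] additive.add[OF left] by (simp_all add: br)
    show "br x (sm (\<lambda>_. c) y) = sm (\<lambda>_. c) (br x y)"
      and "br (sm (\<lambda>_. c) x) y = sm (\<lambda>_. c) (br x y)" for c x y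
      by (simp_all add: br const_right linear const_mem sm_diff_right)
    show "br x y = - br y x" for x y
      by (simp add: br)
    show "br x (sm f y) = sm f (br x y) + sm (anc x f) y" if "f \<in> C" for x y f
      using that by (simp add: br Leibniz linear sm_diff_right)
    show "br x (br y z) + br y (br z x) + br z (br x y) = 0" for x y z
      by (simp add: cyclic_bracket_eq_cyclic_curvature[OF right left br] flat)
  qed
qed

end

lemma additive_dual_section: "dual_section C sm \<xi> \<Longrightarrow> additive (\<lambda>y. \<xi> y m)"
  unfolding dual_section_def additive_def by simp

lemma additive_cdo: "cdo C sm X x \<Longrightarrow> additive X"
  unfolding cdo_def additive_def by blast

locale cdo_frame = smooth_module C sm
  for C :: "('m \<Rightarrow> real) set" and sm :: "('m \<Rightarrow> real) \<Rightarrow> 's::ab_group_add \<Rightarrow> 's" +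
  fixes n :: nat
    and \<xi> :: "nat \<Rightarrow> 's \<Rightarrow> 'm \<Rightarrow> real"
    and X :: "nat \<Rightarrow> 's \<Rightarrow> 's"
    and xs :: "nat \<Rightarrow> ('m \<Rightarrow> real) \<Rightarrow> ('m \<Rightarrow> real)"
    and a :: "nat \<Rightarrow> nat \<Rightarrow> nat \<Rightarrow> 'm \<Rightarrow> real"
  assumes dual: "\<forall>i\<in>{1..n}. dual_section C sm (\<xi> i)"
    and cdos: "\<forall>i\<in>{1..n}. cdo C sm (X i) (xs i)"
    and a_smooth: "\<forall>i\<in>{1..n}. \<forall>j\<in>{1..n}. \<forall>k\<in>{1..n}. a i k j \<in> C"
    and hdual: "\<forall>i\<in>{1..n}. \<forall>j\<in>{1..n}.
        cdo_dual (xs i) (X i) (\<xi> j) = (\<lambda>y m. \<Sum>k=1..n. a i k j m * \<xi> k y m)"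
    and hcomm: "\<forall>i\<in>{1..n}. \<forall>j\<in>{1..n}. \<forall>z.
        X i (X j z) - X j (X i z) = (\<Sum>k=1..n. sm (\<lambda>m. a j i k m - a i j k m) (X k z))"
begin

abbreviation "nabla \<equiv> nablaA sm n \<xi> X"
abbreviation "bracket \<equiv> bracketA sm n \<xi> X"
abbreviation "anchor \<equiv> anchorA n \<xi> xs"

lemma xi_mem: "i \<in> {1..n} \<Longrightarrow> \<xi> i y \<in> C"
  using dual unfolding dual_section_def by blast

lemma xs_mem: "i \<in> {1..n} \<Longrightarrow> f \<in> C \<Longrightarrow> xs i f \<in> C"
  using cdos unfolding cdo_def vector_field_def by blast

lemma a_mem: "i \<in> {1..n} \<Longrightarrow> j \<in> {1..n} \<Longrightarrow> k \<in> {1..n} \<Longrightarrow> a i j k \<in> C"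
  using a_smooth by blast

lemmas frame_mem_intros = mem_intros xi_mem xs_mem a_mem

lemma additive_xi: "i \<in> {1..n} \<Longrightarrow> additive (\<lambda>y. \<xi> i y m)"
  using dual additive_dual_section[of C sm "\<xi> i"] by blast

lemma xi_add: "i \<in> {1..n} \<Longrightarrow> \<xi> i (y + z) = (\<lambda>m. \<xi> i y m + \<xi> i z m)"
  using dual unfolding dual_section_def by blast

lemma xi_diff: "i \<in> {1..n} \<Longrightarrow> \<xi> i (y - z) m = \<xi> i y m - \<xi> i z m"
  by (rule additive.diff[OF additive_xi])

lemma xi_sum: "i \<in> {1..n} \<Longrightarrow> \<xi> i (\<Sum>j\<in>J. v j) m = (\<Sum>j\<in>J. \<xi> i (v j) m)"
  by (rule additive.sum[OF additive_xi])

lemma xi_sm: "i \<in> {1..n} \<Longrightarrow> f \<in> C \<Longrightarrow> \<xi> i (sm f y) = (\<lambda>m. f m * \<xi> i y m)"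
  using dual unfolding dual_section_def by blast

lemma additive_X: "i \<in> {1..n} \<Longrightarrow> additive (X i)"
  using additive_cdo cdos by blast

lemma X_sm: "i \<in> {1..n} \<Longrightarrow> f \<in> C \<Longrightarrow> X i (sm f y) = sm f (X i y) + sm (xs i f) y"
  using cdos unfolding cdo_def by blast

lemma xi_X: "i \<in> {1..n} \<Longrightarrow> k \<in> {1..n} \<Longrightarrow>
    \<xi> k (X i y) m = xs i (\<xi> k y) m - (\<Sum>l=1..n. a i l k m * \<xi> l y m)"
  using hdual unfolding cdo_dual_def by (simp add: fun_eq_iff algebra_simps)

lemma vector_field_anchor: "vector_field C (anchor y)"
proof -
  have "vector_field C (\<lambda>f m. \<Sum>i=1..n. \<xi> i y m * xs i f m)"
    using cdos by (intro vector_field_sum) (auto intro: xi_mem simp: cdo_def)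
  then show ?thesis
    unfolding anchorA_def .
qed

lemma anchor_map_anchor: "anchor_map C sm anchor"
proof -
  have "anchor (y + z) f = (\<lambda>m. anchor y f m + anchor z f m)" for y z f
    by (simp add: anchorA_def xi_add distrib_right sum.distrib)
  moreover have "anchor (sm g y) f = (\<lambda>m. g m * anchor y f m)" if "g \<in> C" for g y f
    using that by (simp add: anchorA_def xi_sm sum_distrib_left mult.assoc)
  ultimately show ?thesis
    unfolding anchor_map_def using vector_field_anchor by blast
qed

lemma anchor_mem: "f \<in> C \<Longrightarrow> anchor y f \<in> C"
  using vector_field_anchor unfolding vector_field_def by blast

lemma connection_nabla: "connection C sm anchor nabla"
  unfolding connection_def
proof (intro conjI allI ballI)
  show "additive (nabla x)" for x
    by (simp add: additive_def nablaA_def additive.add[OF additive_X] additive.add[OF additive_sm]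
        xi_mem sum.distrib)
  show "additive (\<lambda>x. nabla x z)" for z
    by (simp add: additive_def nablaA_def xi_add sm_add_left xi_mem sum.distrib)
  show "nabla (sm f x) y = sm f (nabla x y)" if "f \<in> C" for f x y
    using that by (simp add: nablaA_def xi_sm sm_sm sm_sum_right xi_mem)
  show "nabla x (sm f y) = sm f (nabla x y) + sm (anchor x f) y" if "f \<in> C" for f x y
  proof -
    have "nabla x (sm f y) =
        (\<Sum>i=1..n. sm f (sm (\<xi> i x) (X i y)) + sm (\<lambda>m. \<xi> i x m * xs i f m) y)"
      using that
      by (simp add: nablaA_def X_sm additive.add[OF additive_sm] sm_sm xi_mem xs_mem mult.commute)
    also have "\<dots> = sm f (nabla x y) + (\<Sum>i=1..n. sm (\<lambda>m. \<xi> i x m * xs i f m) y)"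
      using that by (simp add: sum.distrib nablaA_def sm_sum_right)
    also have "(\<Sum>i=1..n. sm (\<lambda>m. \<xi> i x m * xs i f m) y) = sm (anchor x f) y"
      unfolding anchorA_def using that by (intro sm_sum_left[symmetric] frame_mem_intros) auto
    finally show ?thesis .
  qed
qed

definition second_order :: "'s \<Rightarrow> 's \<Rightarrow> 's \<Rightarrow> 's" where
  "second_order x y z = (\<Sum>i=1..n. \<Sum>j=1..n. sm (\<lambda>m. \<xi> i x m * \<xi> j y m) (X i (X j z)))"

(* [X_i, X_j] = sum_k c^k_ij X_k with structure functions c^k_ij = a^k_ji - a^k_ij
   (note that a i k j stands for a^j_ik); this is sum_ij c^k_ij xi^i(x) xi^j(y). *)
definition structure_contraction :: "'s \<Rightarrow> 's \<Rightarrow> nat \<Rightarrow> 'm \<Rightarrow> real" where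
  "structure_contraction x y k =
     (\<lambda>m. \<Sum>i=1..n. \<Sum>j=1..n. \<xi> i x m * \<xi> j y m * (a j i k m - a i j k m))"

lemma structure_contraction_mem: "k \<in> {1..n} \<Longrightarrow> structure_contraction x y k \<in> C"
  unfolding structure_contraction_def by (intro frame_mem_intros) auto

lemma nabla_nabla:
  "nabla x (nabla y z) = second_order x y z + (\<Sum>j=1..n. sm (anchor x (\<xi> j y)) (X j z))"
proof -
  have "nabla x (nabla y z) = (\<Sum>i=1..n. \<Sum>j=1..n. sm (\<lambda>m. \<xi> i x m * \<xi> j y m) (X i (X j z))
      + sm (\<lambda>m. \<xi> i x m * xs i (\<xi> j y) m) (X j z))"
    by (simp add: nablaA_def additive.sum[OF additive_X] X_sm additive.add[OF additive_sm]
        sm_sum_right sm_sm xi_mem xs_mem)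
  also have "\<dots> = second_order x y z
      + (\<Sum>j=1..n. \<Sum>i=1..n. sm (\<lambda>m. \<xi> i x m * xs i (\<xi> j y) m) (X j z))"
    unfolding second_order_def by (simp add: sum.distrib) (rule sum.swap)
  also have "(\<Sum>j=1..n. \<Sum>i=1..n. sm (\<lambda>m. \<xi> i x m * xs i (\<xi> j y) m) (X j z))
      = (\<Sum>j=1..n. sm (anchor x (\<xi> j y)) (X j z))"
    unfolding anchorA_def by (intro sum.cong refl sm_sum_left[symmetric] frame_mem_intros) auto
  finally show ?thesis .
qed

lemma second_order_commutator:
  "second_order x y z - second_order y x z = (\<Sum>k=1..n. sm (structure_contraction x y k) (X k z))"
proof -
  have "second_order y x z = (\<Sum>i=1..n. \<Sum>j=1..n. sm (\<lambda>m. \<xi> i x m * \<xi> j y m) (X j (X i z)))"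
    unfolding second_order_def by (subst sum.swap) (simp add: mult.commute)
  then have "second_order x y z - second_order y x z =
      (\<Sum>i=1..n. \<Sum>j=1..n. sm (\<lambda>m. \<xi> i x m * \<xi> j y m) (X i (X j z) - X j (X i z)))"
    unfolding second_order_def by (simp add: sm_diff_right sum_subtractf frame_mem_intros)
  also have "\<dots> = (\<Sum>i=1..n. \<Sum>j=1..n. \<Sum>k=1..n.
      sm (\<lambda>m. \<xi> i x m * \<xi> j y m * (a j i k m - a i j k m)) (X k z))"
    by (intro sum.cong refl) (simp add: hcomm sm_sum_right sm_sm frame_mem_intros)
  also have "\<dots> = (\<Sum>k=1..n. \<Sum>i=1..n. \<Sum>j=1..n.
      sm (\<lambda>m. \<xi> i x m * \<xi> j y m * (a j i k m - a i j k m)) (X k z))"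
    by (subst sum.swap, subst (2) sum.swap) simp
  also have "\<dots> = (\<Sum>k=1..n. sm (structure_contraction x y k) (X k z))"
    unfolding structure_contraction_def
    by (intro sum.cong refl sm_double_sum_left[symmetric] frame_mem_intros) auto
  finally show ?thesis .
qed

lemma nabla_commutator:
  "nabla x (nabla y z) - nabla y (nabla x z) = (\<Sum>k=1..n.
     sm (\<lambda>m. anchor x (\<xi> k y) m - anchor y (\<xi> k x) m + structure_contraction x y k m) (X k z))"
proof -
  have "nabla x (nabla y z) - nabla y (nabla x z) = (second_order x y z - second_order y x z)
      + (\<Sum>k=1..n. sm (anchor x (\<xi> k y)) (X k z)) - (\<Sum>k=1..n. sm (anchor y (\<xi> k x)) (X k z))"
    by (simp add: nabla_nabla algebra_simps)
  also have "\<dots> = (\<Sum>k=1..n. sm (anchor x (\<xi> k y)) (X k z) - sm (anchor y (\<xi> k x)) (X k z)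
      + sm (structure_contraction x y k) (X k z))"
    unfolding second_order_commutator by (simp add: sum.distrib sum_subtractf algebra_simps)
  also have "\<dots> = (\<Sum>k=1..n.
     sm (\<lambda>m. anchor x (\<xi> k y) m - anchor y (\<xi> k x) m + structure_contraction x y k m) (X k z))"
    by (intro sum.cong refl)
      (simp add: sm_add_left sm_diff_left diff_mem anchor_mem xi_mem structure_contraction_mem)
  finally show ?thesis .
qed

lemma xi_nabla: "k \<in> {1..n} \<Longrightarrow>
    \<xi> k (nabla x y) m = anchor x (\<xi> k y) m - (\<Sum>i=1..n. \<Sum>l=1..n. \<xi> i x m * \<xi> l y m * a i l k m)"
  by (simp add: nablaA_def anchorA_def xi_sum xi_sm xi_X xi_mem right_diff_distrib sum_subtractf
      sum_distrib_left mult_ac)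

lemma xi_bracket: "k \<in> {1..n} \<Longrightarrow> \<xi> k (bracket x y) =
    (\<lambda>m. anchor x (\<xi> k y) m - anchor y (\<xi> k x) m + structure_contraction x y k m)"
proof
  fix m
  have "(\<Sum>i=1..n. \<Sum>l=1..n. \<xi> i y m * \<xi> l x m * a i l k m)
      = (\<Sum>i=1..n. \<Sum>j=1..n. \<xi> i x m * \<xi> j y m * a j i k m)"
    by (subst sum.swap) (simp add: mult_ac)
  moreover assume "k \<in> {1..n}"
  ultimately show "\<xi> k (bracket x y) m =
      anchor x (\<xi> k y) m - anchor y (\<xi> k x) m + structure_contraction x y k m"
    by (simp add: bracketA_def xi_diff xi_nabla structure_contraction_def right_diff_distrib
        sum_subtractf)
qed

lemma curvature_zero: "curvature nabla bracket x y z = 0"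
proof -
  have "nabla (bracket x y) z = (\<Sum>k=1..n. sm (\<xi> k (bracket x y)) (X k z))"
    by (rule nablaA_def)
  also have "\<dots> = nabla x (nabla y z) - nabla y (nabla x z)"
    by (simp add: nabla_commutator xi_bracket)
  finally show ?thesis
    by (simp add: curvature_def)
qed

end

theorem proposition2p11:
  fixes C :: "('m \<Rightarrow> real) set"
    and sm :: "('m \<Rightarrow> real) \<Rightarrow> 's::ab_group_add \<Rightarrow> 's"
    and n :: nat
    and \<xi> :: "nat \<Rightarrow> 's \<Rightarrow> 'm \<Rightarrow> real"
    and X :: "nat \<Rightarrow> 's \<Rightarrow> 's"
    and xs :: "nat \<Rightarrow> ('m \<Rightarrow> real) \<Rightarrow> ('m \<Rightarrow> real)"
    and a :: "nat \<Rightarrow> nat \<Rightarrow> nat \<Rightarrow> 'm \<Rightarrow> real"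
  assumes alg: "smooth_algebra C"
    and modl: "section_module C sm"
    and dual: "\<forall>i\<in>{1..n}. dual_section C sm (\<xi> i)"
    and indep: "lin_indep_dual C n \<xi>"
    and cdos: "\<forall>i\<in>{1..n}. cdo C sm (X i) (xs i)"
    and a_smooth: "\<forall>i\<in>{1..n}. \<forall>j\<in>{1..n}. \<forall>k\<in>{1..n}. a i k j \<in> C"
    and hdual: "\<forall>i\<in>{1..n}. \<forall>j\<in>{1..n}.
        cdo_dual (xs i) (X i) (\<xi> j) = (\<lambda>y m. \<Sum>k=1..n. a i k j m * \<xi> k y m)"
    and hcomm: "\<forall>i\<in>{1..n}. \<forall>j\<in>{1..n}. \<forall>z.
        X i (X j z) - X j (X i z) = (\<Sum>k=1..n. sm (\<lambda>m. a j i k m - a i j k m) (X k z))"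
  shows "(\<forall>x y z. curvature (nablaA sm n \<xi> X) (bracketA sm n \<xi> X) x y z = 0)
         \<and> lie_algebroid C sm (bracketA sm n \<xi> X) (anchorA n \<xi> xs)"
proof -
  interpret cdo_frame C sm n \<xi> X xs a
    using alg modl dual cdos a_smooth hdual hcomm by unfold_locales
  show ?thesis
    using curvature_zero
      lie_algebroid_of_flat_torsion_free[OF anchor_map_anchor connection_nabla bracketA_def curvature_zero]
    by blast
qed

end
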